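(* Let $\kappa\le\lambda<0$ and nonnegative progress values be given, and consider the sequential game $(A^{s},B^{s})$ and the cooperative game $(A^{c},B^{c})$ defined in the context. Suppose that $\max_{i\in\Gamma^1}a^{s}_i>\kappa$ and that there exists $j\in\Gamma^2$ with $b_{i',j}>\lambda$ for every $i'\in\arg\max_{i\in\Gamma^1}a^{s}_i$. Let $\Pi_{s}$ be the set of pairs $(i,j)$ with $i\in\arg\max_{i'\in\Gamma^1}a^{s}_{i'}$ and $j\in\arg\max_{j'\in\Gamma^2}b_{i,j'}$ (equivalently, the set of Nash, and also of Stackelberg, equilibria of the sequential game); let $\Pi_{st}$ be the set of Stackelberg equilibria (P1 leader) of the cooperative game; let $\Pi_{n}$ be the set of Nash equilibria of the cooperative game; and let $\Pi_{n,RoR}$ be the set of those Nash equilibria of the cooperative game that maximize P1's payoff $a^{c}_{i,j}$ among all Nash equilibria of the cooperative game. Then $$\emptyset\neq\Pi_{s}=\Pi_{st}=\Pi_{n,RoR}\subseteq\Pi_{n},$$ and every pair in $\Pi_s$ is feasible.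
   Context: Abstract two-player racing set-up. Player 1 (P1, the leader) chooses a trajectory $i\in\Gamma^1=\{1,\dots,n\}$, player 2 (P2) chooses $j\in\Gamma^2=\{1,\dots,m\}$. Each trajectory has a progress value $P^1_i\ge 0$ (resp. $P^2_j\ge 0$). Each trajectory is either on track or off track, and each pair $(i,j)$ either collides or not. A pair $(i,j)$ is feasible if $i$ and $j$ are both on track and $(i,j)$ does not collide. Constants $\kappa\le\lambda<0$ are fixed. Sequential game: P1's payoff does not depend on $j$: $a^{s}_{i,j}=a^{s}_i=\kappa$ if $i$ is off track, and $a^{s}_i=P^1_i$ otherwise. P2's payoff: $b_{i,j}=\kappa$ if $j$ is off track; otherwise $b_{i,j}=\lambda$ if $(i,j)$ collides; otherwise $b_{i,j}=P^2_j$. Cooperative game: $a^{c}_{i,j}=\kappa$ if $i$ is off track; otherwise $\lambda$ if $(i,j)$ collides; otherwise $P^1_i$. P2's payoff is the same $b_{i,j}$ as in the sequential game. For a bimatrix game $(A,B)$: $R(i)=\arg\max_{j\in\Gamma^2}b_{i,j}$; $(i^*,j^* )$ is a Stackelberg equilibrium with P1 as leader if $i^*\in\arg\max_{i}\min_{j\in R(i)}a_{i,j}$ and $j^*\in R(i^* )$; $(i^*,j^* )$ is a Nash equilibrium if $a_{i^*,j^*}\ge a_{i,j^*}$ for all $i$ and $b_{i^*,j^*}\ge b_{i^*,j}$ for all $j$. Only pure strategies are considered. *)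

theory Defs
  imports Complex_Main
begin

definition argmax_on :: "'a set \<Rightarrow> ('a \<Rightarrow> real) \<Rightarrow> 'a set" where
  "argmax_on S f = {x \<in> S. \<forall>y \<in> S. f y \<le> f x}"

definition best_resp :: "nat set \<Rightarrow> (nat \<Rightarrow> nat \<Rightarrow> real) \<Rightarrow> nat \<Rightarrow> nat set" where
  "best_resp G2 b i = argmax_on G2 (\<lambda>j. b i j)"

text \<open>Stackelberg equilibria with P1 as leader (pessimistic: min over R(i)).\<close>
definition stackelberg_eq ::
  "nat set \<Rightarrow> nat set \<Rightarrow> (nat \<Rightarrow> nat \<Rightarrow> real) \<Rightarrow> (nat \<Rightarrow> nat \<Rightarrow> real) \<Rightarrow> (nat \<times> nat) set" where
  "stackelberg_eq G1 G2 a b =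
     {(i, j). i \<in> argmax_on G1 (\<lambda>i'. Min ((\<lambda>j'. a i' j') ` best_resp G2 b i'))
              \<and> j \<in> best_resp G2 b i}"

definition nash_eq ::
  "nat set \<Rightarrow> nat set \<Rightarrow> (nat \<Rightarrow> nat \<Rightarrow> real) \<Rightarrow> (nat \<Rightarrow> nat \<Rightarrow> real) \<Rightarrow> (nat \<times> nat) set" where
  "nash_eq G1 G2 a b =
     {(i, j). i \<in> G1 \<and> j \<in> G2 \<and> (\<forall>i' \<in> G1. a i' j \<le> a i j) \<and> (\<forall>j' \<in> G2. b i j' \<le> b i j)}"

definition nash_RoR ::
  "nat set \<Rightarrow> nat set \<Rightarrow> (nat \<Rightarrow> nat \<Rightarrow> real) \<Rightarrow> (nat \<Rightarrow> nat \<Rightarrow> real) \<Rightarrow> (nat \<times> nat) set" where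
  "nash_RoR G1 G2 a b =
     {(i, j) \<in> nash_eq G1 G2 a b. \<forall>(i', j') \<in> nash_eq G1 G2 a b. a i' j' \<le> a i j}"

text \<open>The racing games. on1 i / on2 j: trajectory is on track; coll i j: pair collides.\<close>

definition a_seq :: "real \<Rightarrow> (nat \<Rightarrow> real) \<Rightarrow> (nat \<Rightarrow> bool) \<Rightarrow> nat \<Rightarrow> real" where
  "a_seq \<kappa> P1 on1 i = (if \<not> on1 i then \<kappa> else P1 i)"

definition a_coop :: "real \<Rightarrow> real \<Rightarrow> (nat \<Rightarrow> real) \<Rightarrow> (nat \<Rightarrow> bool) \<Rightarrow> (nat \<Rightarrow> nat \<Rightarrow> bool)
    \<Rightarrow> nat \<Rightarrow> nat \<Rightarrow> real" where
  "a_coop \<kappa> lam P1 on1 coll i j =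
     (if \<not> on1 i then \<kappa> else if coll i j then lam else P1 i)"

definition b_pay :: "real \<Rightarrow> real \<Rightarrow> (nat \<Rightarrow> real) \<Rightarrow> (nat \<Rightarrow> bool) \<Rightarrow> (nat \<Rightarrow> nat \<Rightarrow> bool)
    \<Rightarrow> nat \<Rightarrow> nat \<Rightarrow> real" where
  "b_pay \<kappa> lam P2 on2 coll i j =
     (if \<not> on2 j then \<kappa> else if coll i j then lam else P2 j)"

definition feasible :: "(nat \<Rightarrow> bool) \<Rightarrow> (nat \<Rightarrow> bool) \<Rightarrow> (nat \<Rightarrow> nat \<Rightarrow> bool) \<Rightarrow> nat \<Rightarrow> nat \<Rightarrow> bool" where
  "feasible on1 on2 coll i j \<longleftrightarrow> on1 i \<and> on2 j \<and> \<not> coll i j"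

end

theory Submission
  imports Defs
begin

text \<open>Let \<open>M\<close> be P1's best payoff in the sequential game and \<open>I\<close> the set of its maximisers.
  Since \<open>M > \<kappa>\<close>, every \<open>i \<in> I\<close> is on track with progress \<open>M \<ge> 0\<close>. By hypothesis P2 can beat
  the collision payoff \<open>\<lambda>\<close> against every \<open>i \<in> I\<close>, so each best response to \<open>i\<close> is on track
  and collision-free, and P1 earns exactly \<open>M\<close> on it in the cooperative game. Every entry of the
  cooperative game is at most \<open>max \<lambda> M = M\<close>, and strictly less outside the rows \<open>I\<close>. In a
  bimatrix game with such a leader bound, both the Stackelberg equilibria and the
  leader-optimal Nash equilibria are exactly the pairs (row in \<open>I\<close>, best response).\<close>

lemma argmax_on_eq_Max:
  assumes "finite S"
  shows "argmax_on S f = {x \<in> S. f x = Max (f ` S)}"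
proof -
  have "f x = Max (f ` S) \<longleftrightarrow> (\<forall>y \<in> S. f y \<le> f x)" if "x \<in> S" for x
  proof -
    have "f x \<le> Max (f ` S)" using assms that by simp
    moreover have "Max (f ` S) \<le> f x \<longleftrightarrow> (\<forall>y \<in> S. f y \<le> f x)"
      using assms that by (subst Max_le_iff) auto
    ultimately show ?thesis by linarith
  qed
  then show ?thesis unfolding argmax_on_def by auto
qed

lemma argmax_on_nonempty:
  assumes "finite S" "S \<noteq> {}"
  shows "argmax_on S f \<noteq> {}"
proof -
  obtain x where "x \<in> S" "f x = Max (f ` S)"
    using Max_in[OF finite_imageI[OF assms(1)]] assms(2) by (metis image_is_empty imageE)
  then have "x \<in> argmax_on S f" using argmax_on_eq_Max[OF assms(1)] by simp
  then show ?thesis by blast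
qed

lemma argmax_on_eq_if_strict_bound:
  assumes "I \<subseteq> S" "I \<noteq> {}"
    and "\<forall>x \<in> I. f x = M" and "\<forall>x \<in> S - I. f x < M"
  shows "argmax_on S f = I"
proof -
  have le: "f x \<le> M" if "x \<in> S" for x
    using assms that by (metis DiffI less_eq_real_def)
  obtain x0 where "x0 \<in> I" using assms(2) by blast
  then have "x \<in> I" if "x \<in> S" "\<forall>y \<in> S. f y \<le> f x" for x
    using that assms by (metis DiffI in_mono not_le)
  then show ?thesis
    using assms le unfolding argmax_on_def by auto
qed

lemma best_resp_nonempty: "finite G2 \<Longrightarrow> G2 \<noteq> {} \<Longrightarrow> best_resp G2 b i \<noteq> {}"
  unfolding best_resp_def by (rule argmax_on_nonempty)

lemma best_resp_subset: "best_resp G2 b i \<subseteq> G2"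
  unfolding best_resp_def argmax_on_def by auto

context
  fixes G1 G2 :: "nat set" and a b :: "nat \<Rightarrow> nat \<Rightarrow> real" and I :: "nat set" and M :: real
  assumes G2: "finite G2" "G2 \<noteq> {}"
    and I: "I \<subseteq> G1" "I \<noteq> {}"
    and attained: "\<forall>i \<in> I. \<forall>j \<in> best_resp G2 b i. a i j = M"
    and below: "\<forall>i \<in> G1 - I. \<forall>j \<in> G2. a i j < M"
begin

lemma stackelberg_eq_eq_bound_maximisers:
  "stackelberg_eq G1 G2 a b = {(i, j). i \<in> I \<and> j \<in> best_resp G2 b i}"
proof -
  define v where "v i = Min ((\<lambda>j. a i j) ` best_resp G2 b i)" for i
  have finite_R: "finite (best_resp G2 b i)" for i
    using finite_subset[OF best_resp_subset G2(1)] .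
  have "v i = M" if "i \<in> I" for i
  proof -
    have "(\<lambda>j. a i j) ` best_resp G2 b i = {M}"
      using attained that best_resp_nonempty[OF G2, of b i] by auto
    then show ?thesis unfolding v_def by simp
  qed
  moreover have "v i < M" if "i \<in> G1 - I" for i
  proof -
    obtain j where j: "j \<in> best_resp G2 b i" using best_resp_nonempty[OF G2] by blast
    then have "v i \<le> a i j" unfolding v_def using finite_R by simp
    also have "\<dots> < M" using below that j best_resp_subset by blast
    finally show ?thesis .
  qed
  ultimately have "argmax_on G1 v = I"
    by (intro argmax_on_eq_if_strict_bound[OF I]) auto
  then show ?thesis unfolding stackelberg_eq_def v_def by simp
qed

context
  assumes bounded: "\<forall>i \<in> G1. \<forall>j \<in> G2. a i j \<le> M"
begin

lemma bound_maximisers_subset_nash_eq: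
  "{(i, j). i \<in> I \<and> j \<in> best_resp G2 b i} \<subseteq> nash_eq G1 G2 a b"
proof safe
  fix i j assume "i \<in> I" "j \<in> best_resp G2 b i"
  then show "(i, j) \<in> nash_eq G1 G2 a b"
    using attained bounded I(1) best_resp_subset
    unfolding nash_eq_def best_resp_def argmax_on_def by auto
qed

lemma nash_RoR_eq_bound_maximisers:
  "nash_RoR G1 G2 a b = {(i, j). i \<in> I \<and> j \<in> best_resp G2 b i}"
proof -
  have le_M: "a i j \<le> M" if "(i, j) \<in> nash_eq G1 G2 a b" for i j
    using that bounded unfolding nash_eq_def by auto
  have eq_M: "(i, j) \<in> nash_eq G1 G2 a b \<and> a i j = M \<longleftrightarrow> i \<in> I \<and> j \<in> best_resp G2 b i"
    for i j
  proof
    assume "(i, j) \<in> nash_eq G1 G2 a b \<and> a i j = M"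
    then show "i \<in> I \<and> j \<in> best_resp G2 b i"
      using below unfolding nash_eq_def best_resp_def argmax_on_def by fastforce
  qed (use attained bound_maximisers_subset_nash_eq in auto)
  obtain i0 j0 where "i0 \<in> I" "j0 \<in> best_resp G2 b i0"
    using I(2) best_resp_nonempty[OF G2] by blast
  then have witness: "(i0, j0) \<in> nash_eq G1 G2 a b" "a i0 j0 = M"
    using eq_M by auto
  have "(i, j) \<in> nash_RoR G1 G2 a b \<longleftrightarrow> (i, j) \<in> nash_eq G1 G2 a b \<and> a i j = M" for i j
  proof
    assume "(i, j) \<in> nash_RoR G1 G2 a b"
    then have "(i, j) \<in> nash_eq G1 G2 a b" "a i0 j0 \<le> a i j"
      using witness(1) unfolding nash_RoR_def by auto
    then show "(i, j) \<in> nash_eq G1 G2 a b \<and> a i j = M"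
      using le_M witness(2) by force
  next
    assume "(i, j) \<in> nash_eq G1 G2 a b \<and> a i j = M"
    then show "(i, j) \<in> nash_RoR G1 G2 a b"
      using le_M unfolding nash_RoR_def by auto
  qed
  then show ?thesis using eq_M by (auto simp: set_eq_iff)
qed

end

end

lemma a_seq_eq_gt_kappa_imp_on_track:
  assumes "a_seq \<kappa> P1 on1 i = M" "M > \<kappa>"
  shows "on1 i \<and> P1 i = M"
  using assms unfolding a_seq_def by (auto split: if_splits)

lemma a_coop_eq_a_seq_if_no_collision:
  "\<not> coll i j \<Longrightarrow> a_coop \<kappa> lam P1 on1 coll i j = a_seq \<kappa> P1 on1 i"
  unfolding a_coop_def a_seq_def by simp

lemma a_coop_le_if_a_seq_le:
  assumes "\<kappa> \<le> lam" "lam < 0" "0 \<le> M" "a_seq \<kappa> P1 on1 i \<le> M"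
  shows "a_coop \<kappa> lam P1 on1 coll i j \<le> M"
  using assms unfolding a_coop_def a_seq_def by (auto split: if_splits)

lemma a_coop_less_if_a_seq_less:
  assumes "\<kappa> \<le> lam" "lam < 0" "0 \<le> M" "a_seq \<kappa> P1 on1 i < M"
  shows "a_coop \<kappa> lam P1 on1 coll i j < M"
  using assms unfolding a_coop_def a_seq_def by (auto split: if_splits)

lemma best_resp_b_pay_feasible:
  assumes "\<kappa> \<le> lam" "j0 \<in> G2" "lam < b_pay \<kappa> lam P2 on2 coll i j0"
    and "j \<in> best_resp G2 (b_pay \<kappa> lam P2 on2 coll) i"
  shows "on2 j \<and> \<not> coll i j"
proof -
  have "b_pay \<kappa> lam P2 on2 coll i j0 \<le> b_pay \<kappa> lam P2 on2 coll i j"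
    using assms(2,4) unfolding best_resp_def argmax_on_def by blast
  with assms(1,3) show ?thesis unfolding b_pay_def by (auto split: if_splits)
qed

theorem theorem1:
  fixes n m :: nat and \<kappa> lam :: real
    and P1 P2 :: "nat \<Rightarrow> real"
    and on1 on2 :: "nat \<Rightarrow> bool" and coll :: "nat \<Rightarrow> nat \<Rightarrow> bool"
  defines "as \<equiv> a_seq \<kappa> P1 on1"
    and "ac \<equiv> a_coop \<kappa> lam P1 on1 coll"
    and "b \<equiv> b_pay \<kappa> lam P2 on2 coll"
  defines "\<Pi>s \<equiv> {(i, j). i \<in> argmax_on {1..n} as \<and> j \<in> argmax_on {1..m} (\<lambda>j'. b i j')}"
    and "\<Pi>st \<equiv> stackelberg_eq {1..n} {1..m} ac b"
    and "\<Pi>n \<equiv> nash_eq {1..n} {1..m} ac b"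
    and "\<Pi>nRoR \<equiv> nash_RoR {1..n} {1..m} ac b"
  assumes "n \<ge> 1" and "m \<ge> 1"
    and "\<kappa> \<le> lam" and "lam < 0"
    and "\<forall>i \<in> {1..n}. P1 i \<ge> 0" and "\<forall>j \<in> {1..m}. P2 j \<ge> 0"
    and "Max (as ` {1..n}) > \<kappa>"
    and "\<exists>j \<in> {1..m}. \<forall>i' \<in> argmax_on {1..n} as. b i' j > lam"
  shows "\<Pi>s \<noteq> {} \<and> \<Pi>s = \<Pi>st \<and> \<Pi>st = \<Pi>nRoR \<and> \<Pi>nRoR \<subseteq> \<Pi>n
         \<and> (\<forall>(i, j) \<in> \<Pi>s. feasible on1 on2 coll i j)"
proof -
  define M where "M = Max (as ` {1..n})"
  define I where "I = argmax_on {1..n} as"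
  define R where "R = best_resp {1..m} b"
  have I_eq: "I = {i \<in> {1..n}. as i = M}"
    unfolding I_def M_def by (rule argmax_on_eq_Max) simp
  have "I \<noteq> {}" unfolding I_def by (rule argmax_on_nonempty) (use \<open>n \<ge> 1\<close> in auto)
  have on_track: "on1 i \<and> P1 i = M" if "i \<in> I" for i
    using a_seq_eq_gt_kappa_imp_on_track that assms(14) unfolding I_eq as_def M_def by blast
  with \<open>I \<noteq> {}\<close> have "M \<ge> 0" using I_eq assms(12) by force
  obtain j0 where "j0 \<in> {1..m}" "\<forall>i \<in> I. lam < b i j0" using assms(15) I_def by blast
  then have no_crash: "on2 j \<and> \<not> coll i j" if "i \<in> I" "j \<in> R i" for i j
    using best_resp_b_pay_feasible[OF assms(10)] that unfolding R_def b_def by blast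
  have attained: "\<forall>i \<in> I. \<forall>j \<in> R i. ac i j = M"
    using a_coop_eq_a_seq_if_no_collision no_crash I_eq unfolding ac_def as_def by simp
  have as_le: "as i \<le> M" if "i \<in> {1..n}" for i
    using that unfolding M_def by simp
  have bounded: "\<forall>i \<in> {1..n}. \<forall>j \<in> {1..m}. ac i j \<le> M"
    using a_coop_le_if_a_seq_le[OF assms(10,11) \<open>M \<ge> 0\<close>] as_le unfolding ac_def as_def by blast
  have below: "\<forall>i \<in> {1..n} - I. \<forall>j \<in> {1..m}. ac i j < M"
  proof (intro ballI)
    fix i j assume "i \<in> {1..n} - I"
    then have "as i < M" using as_le I_eq by (auto simp: order.order_iff_strict)
    then show "ac i j < M"
      unfolding ac_def as_def by (rule a_coop_less_if_a_seq_less[OF assms(10,11) \<open>M \<ge> 0\<close>])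
  qed
  have "finite {1..m}" "{1..m} \<noteq> {}" "I \<subseteq> {1..n}"
    using \<open>m \<ge> 1\<close> I_eq by auto
  note leader_bound = this \<open>I \<noteq> {}\<close> attained[unfolded R_def] below
  have "\<Pi>s = {(i, j). i \<in> I \<and> j \<in> R i}"
    unfolding \<Pi>s_def I_def R_def best_resp_def ..
  moreover have "\<Pi>st = {(i, j). i \<in> I \<and> j \<in> R i}"
    unfolding \<Pi>st_def R_def by (rule stackelberg_eq_eq_bound_maximisers[OF leader_bound])
  moreover have "\<Pi>nRoR = {(i, j). i \<in> I \<and> j \<in> R i}"
    unfolding \<Pi>nRoR_def R_def by (rule nash_RoR_eq_bound_maximisers[OF leader_bound bounded])
  moreover have "{(i, j). i \<in> I \<and> j \<in> R i} \<subseteq> \<Pi>n"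
    unfolding \<Pi>n_def R_def by (rule bound_maximisers_subset_nash_eq[OF leader_bound bounded])
  moreover have "\<exists>i j. i \<in> I \<and> j \<in> R i"
    using \<open>I \<noteq> {}\<close> best_resp_nonempty[OF leader_bound(1,2)] unfolding R_def by blast
  ultimately show ?thesis
    using on_track no_crash unfolding feasible_def by auto
qed

end
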